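(* Let $(A_i)_{i\in I}$ be any family of finite partially ordered sets, each with a least element $0_i$ and a greatest element $1_i$, and let $A=\prod_{i\in I}A_i$ with the componentwise partial order $\preccurlyeq$. Let $S$ be the set of elements of $A$ whose $i$-th coordinate is $0_i$ for all but at most one $i$, and $S'$ the set of elements whose $i$-th coordinate is $1_i$ for all but at most one $i$. Let $U(A)\subseteq 2^A$ be the set of up-sets of $(A,\preccurlyeq)$. Then for $x\in U(A)$ the following are equivalent: (i) $x$ is an isolated point of $U(A)$ in the topology induced by the natural topology on $2^A$; (ii) for some natural number $n$ and distinct $i_0,\dots,i_{n-1}\in I$, $x$ is the inverse image under the projection of $A$ onto $A_{i_0}\times\dots\times A_{i_{n-1}}$ of an up-set of that product; (iii) $x$ lies in the lattice of up-sets of $A$ generated (under pairwise unions and intersections) by $\emptyset$ and the sets ${\uparrow}(s)$ for $s\in S$; (iv) $A-x$ lies in the lattice of down-sets of $A$ generated (under pairwise unions and intersections) by $\emptyset$ and the sets ${\downarrow}(s)$ for $s\in S'$.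
   Context: An up-set (down-set) of a poset is a subset closed upward (downward). ${\uparrow}(a)=\{b\mid b\succcurlyeq a\}$ and ${\downarrow}(a)=\{b\mid b\preccurlyeq a\}$. The natural topology on $2^A$ (the set of subsets of $A$) is the product topology of copies of the discrete space $\{0,1\}$, with subbasis the sets $\{x\mid a\in x\}$ and $\{x\mid a\notin x\}$ for $a\in A$. *)

theory Defs
  imports "HOL-Analysis.Analysis"
begin

definition prod_le :: "'i set \<Rightarrow> ('i \<Rightarrow> ('a \<times> 'a) set) \<Rightarrow> ('i \<Rightarrow> 'a) \<Rightarrow> ('i \<Rightarrow> 'a) \<Rightarrow> bool" where
  "prod_le J R a b \<longleftrightarrow> (\<forall>i\<in>J. (a i, b i) \<in> R i)"

definition up_set :: "'b set \<Rightarrow> ('b \<Rightarrow> 'b \<Rightarrow> bool) \<Rightarrow> 'b set \<Rightarrow> bool" where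
  "up_set B le x \<longleftrightarrow> x \<subseteq> B \<and> (\<forall>a\<in>x. \<forall>b\<in>B. le a b \<longrightarrow> b \<in> x)"

definition down_set :: "'b set \<Rightarrow> ('b \<Rightarrow> 'b \<Rightarrow> bool) \<Rightarrow> 'b set \<Rightarrow> bool" where
  "down_set B le x \<longleftrightarrow> x \<subseteq> B \<and> (\<forall>a\<in>x. \<forall>b\<in>B. le b a \<longrightarrow> b \<in> x)"

definition up_of :: "'b set \<Rightarrow> ('b \<Rightarrow> 'b \<Rightarrow> bool) \<Rightarrow> 'b \<Rightarrow> 'b set" where
  "up_of B le a = {b\<in>B. le a b}"

definition down_of :: "'b set \<Rightarrow> ('b \<Rightarrow> 'b \<Rightarrow> bool) \<Rightarrow> 'b \<Rightarrow> 'b set" where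
  "down_of B le a = {b\<in>B. le b a}"

inductive_set gen_lattice :: "'b set set \<Rightarrow> 'b set set" for G where
  base: "g \<in> G \<Longrightarrow> g \<in> gen_lattice G"
| un: "x \<in> gen_lattice G \<Longrightarrow> y \<in> gen_lattice G \<Longrightarrow> x \<union> y \<in> gen_lattice G"
| int: "x \<in> gen_lattice G \<Longrightarrow> y \<in> gen_lattice G \<Longrightarrow> x \<inter> y \<in> gen_lattice G"

(* natural (product of discrete {0,1}) topology on 2^B, via its subbasis *)
definition natural_top :: "'b set \<Rightarrow> 'b set topology" where
  "natural_top B = topology_generated_by
     ({{x. x \<subseteq> B \<and> a \<in> x} | a. a \<in> B} \<union> {{x. x \<subseteq> B \<and> a \<notin> x} | a. a \<in> B})"

end

theory Submission
  imports Defs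
begin

text \<open>
  All four conditions say that the up-set \<open>x\<close> is determined by finitely many coordinates.
  A basic neighbourhood of \<open>x\<close> prescribes finitely many points \<open>p \<in> x\<close> and \<open>n \<notin> x\<close>; the up-closure
  of the \<open>p\<close>'s and the complement of the down-closure of the \<open>n\<close>'s are up-sets in that neighbourhood,
  so if \<open>x\<close> is isolated both equal \<open>x\<close>; then choosing for each pair \<open>(p, n)\<close> a coordinate where
  \<open>p\<close> is not below \<open>n\<close> gives finitely many coordinates that determine \<open>x\<close>.
  Conversely, if \<open>x\<close> is determined by a finite set \<open>J\<close> of coordinates, the points of \<open>x\<close> that are
  \<open>0\<close> off \<open>J\<close> are finitely many (the \<open>A\<^sub>i\<close> are finite) and generate \<open>x\<close> as an up-set; together with
  the points outside \<open>x\<close> that are \<open>1\<close> off \<open>J\<close> they isolate \<open>x\<close>. The same points exhibit \<open>x\<close> as a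
  finite union of sets \<open>\<up>(m)\<close>, each an intersection of generators \<open>\<up>(s)\<close>, \<open>s \<in> S\<close>, while every
  generator depends on a single coordinate. Condition (iv) is (iii) for the dual order applied to
  \<open>A - x\<close>.
\<close>

definition determined_by :: "('i \<Rightarrow> 'a) set \<Rightarrow> 'i set \<Rightarrow> ('i \<Rightarrow> 'a) set \<Rightarrow> bool" where
  "determined_by B J x \<longleftrightarrow> (\<forall>a\<in>B. \<forall>b\<in>B. (\<forall>i\<in>J. a i = b i) \<longrightarrow> (a \<in> x \<longleftrightarrow> b \<in> x))"

definition finitely_determined :: "'i set \<Rightarrow> ('i \<Rightarrow> 'a) set \<Rightarrow> ('i \<Rightarrow> 'a) set \<Rightarrow> bool" where
  "finitely_determined I B x \<longleftrightarrow> (\<exists>J. finite J \<and> J \<subseteq> I \<and> determined_by B J x)"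

lemma determined_byI:
  assumes "\<And>a b. a \<in> B \<Longrightarrow> b \<in> B \<Longrightarrow> \<forall>i\<in>J. a i = b i \<Longrightarrow> a \<in> x \<Longrightarrow> b \<in> x"
  shows "determined_by B J x"
  unfolding determined_by_def using assms by metis

lemma determined_by_mono: "determined_by B J x \<Longrightarrow> J \<subseteq> K \<Longrightarrow> determined_by B K x"
  unfolding determined_by_def by blast

lemma determined_by_Diff: "determined_by B J (B - x) \<longleftrightarrow> determined_by B J x"
  unfolding determined_by_def by blast

lemma determined_by_Un: "determined_by B J x \<Longrightarrow> determined_by B J y \<Longrightarrow> determined_by B J (x \<union> y)"
  unfolding determined_by_def by blast

lemma determined_by_Int: "determined_by B J x \<Longrightarrow> determined_by B J y \<Longrightarrow> determined_by B J (x \<inter> y)"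
  unfolding determined_by_def by blast

lemma finitely_determined_Diff: "finitely_determined I B (B - x) \<longleftrightarrow> finitely_determined I B x"
  by (simp add: finitely_determined_def determined_by_Diff)

lemma finitely_determined_combine:
  assumes "finitely_determined I B x" "finitely_determined I B y"
    and "\<And>J. determined_by B J x \<Longrightarrow> determined_by B J y \<Longrightarrow> determined_by B J z"
  shows "finitely_determined I B z"
proof -
  obtain J K where "finite J" "J \<subseteq> I" "determined_by B J x" "finite K" "K \<subseteq> I" "determined_by B K y"
    using assms(1,2) unfolding finitely_determined_def by blast
  then have "determined_by B (J \<union> K) z"
    by (intro assms(3)) (auto intro: determined_by_mono)
  with \<open>finite J\<close> \<open>finite K\<close> \<open>J \<subseteq> I\<close> \<open>K \<subseteq> I\<close> show ?thesis
    unfolding finitely_determined_def by blast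
qed

lemma gen_lattice_finitely_determined:
  assumes "x \<in> gen_lattice G" "\<And>g. g \<in> G \<Longrightarrow> finitely_determined I B g"
  shows "finitely_determined I B x"
  using assms(1)
proof induction
  case (un x y)
  from un.IH show ?case by (rule finitely_determined_combine) (rule determined_by_Un)
next
  case (int x y)
  from int.IH show ?case by (rule finitely_determined_combine) (rule determined_by_Int)
qed (rule assms(2))

lemma finitely_determined_pullback:
  fixes n :: nat
  assumes "f ` {..<n} \<subseteq> I" "x = {a \<in> B. restrict (\<lambda>k. a (f k)) {..<n} \<in> y}"
  shows "finitely_determined I B x"
proof -
  have "determined_by B (f ` {..<n}) x"
  proof (rule determined_byI)
    fix a b assume "a \<in> B" "b \<in> B" "\<forall>i\<in>f ` {..<n}. a i = b i" "a \<in> x"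
    moreover from this have "restrict (\<lambda>k. a (f k)) {..<n} = restrict (\<lambda>k. b (f k)) {..<n}"
      by (intro restrict_ext) auto
    ultimately show "b \<in> x" using assms(2) by simp
  qed
  then show ?thesis
    using assms(1) unfolding finitely_determined_def by (intro exI[of _ "f ` {..<n}"]) (simp add: finite_imageI)
qed

lemma gen_lattice_UN:
  assumes "finite M" "\<And>m. m \<in> M \<Longrightarrow> f m \<in> gen_lattice G" "{} \<in> G"
  shows "(\<Union>m\<in>M. f m) \<in> gen_lattice G"
  using assms by (induction M rule: finite_induct) (auto intro: gen_lattice.intros)

lemma down_of_eq_up_of_conversep: "down_of B le = up_of B le\<inverse>\<inverse>"
  by (simp add: down_of_def up_of_def fun_eq_iff)

lemma up_set_Diff_conversep: "up_set B le x \<Longrightarrow> up_set B le\<inverse>\<inverse> (B - x)"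
  unfolding up_set_def by blast

lemma up_set_UN_up_of: "transp le \<Longrightarrow> up_set B le (\<Union>p\<in>P. up_of B le p)"
  unfolding up_set_def up_of_def by (blast dest: transpD)

lemma up_set_image:
  assumes "up_set B le x" "f ` B \<subseteq> C"
    and lift: "\<And>a u. a \<in> B \<Longrightarrow> u \<in> C \<Longrightarrow> le' (f a) u \<Longrightarrow> \<exists>a'\<in>B. le a a' \<and> f a' = u"
  shows "up_set C le' (f ` x)"
  unfolding up_set_def
proof (intro conjI ballI impI)
  show "f ` x \<subseteq> C" using assms(1,2) unfolding up_set_def by blast
next
  fix t u assume "t \<in> f ` x" "u \<in> C" "le' t u"
  then obtain a where "a \<in> x" "t = f a" by blast
  with lift obtain a' where "a' \<in> B" "le a a'" "f a' = u"
    using \<open>u \<in> C\<close> \<open>le' t u\<close> assms(1) unfolding up_set_def by blast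
  then show "u \<in> f ` x" using \<open>a \<in> x\<close> assms(1) unfolding up_set_def by blast
qed

lemma determined_by_eq_preimage_image:
  assumes "x \<subseteq> B" "determined_by B J x"
    and "\<And>a b. a \<in> B \<Longrightarrow> b \<in> B \<Longrightarrow> f a = f b \<Longrightarrow> \<forall>i\<in>J. a i = b i"
  shows "x = {a \<in> B. f a \<in> f ` x}"
  using assms unfolding determined_by_def by blast

lemma prod_le_converse: "prod_le I (\<lambda>i. (R i)\<inverse>) = (prod_le I R)\<inverse>\<inverse>"
  by (simp add: prod_le_def fun_eq_iff)

definition cylinder :: "'b set \<Rightarrow> 'b set \<Rightarrow> 'b set \<Rightarrow> 'b set set" where
  "cylinder B P N = {w. w \<subseteq> B \<and> P \<subseteq> w \<and> N \<inter> w = {}}"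

lemma topspace_natural_top: "B \<noteq> {} \<Longrightarrow> topspace (natural_top B) = Pow B"
  unfolding natural_top_def topology_generated_by_topspace by blast

lemma openin_natural_top_cylinder:
  assumes "B \<noteq> {}" "finite P" "finite N" "P \<subseteq> B" "N \<subseteq> B"
  shows "openin (natural_top B) (cylinder B P N)"
proof -
  have "cylinder B P N = topspace (natural_top B) \<inter>
      \<Inter>((\<lambda>p. {w. w \<subseteq> B \<and> p \<in> w}) ` P \<union> (\<lambda>n. {w. w \<subseteq> B \<and> n \<notin> w}) ` N)"
    using assms(1) by (auto simp: topspace_natural_top cylinder_def)
  also have "openin (natural_top B) \<dots>"
    using assms(2-5) unfolding natural_top_def
    by (intro openin_Int_Inter openin_topspace) (auto intro!: topology_generated_by_Basis)
  finally show ?thesis .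
qed

lemma natural_top_open_contains_cylinder:
  assumes "openin (natural_top B) U" "z \<in> U"
  shows "\<exists>P N. finite P \<and> finite N \<and> P \<subseteq> z \<and> N \<subseteq> B - z \<and> cylinder B P N \<subseteq> U"
  using assms[unfolded natural_top_def openin_topology_generated_by_iff]
proof (induction arbitrary: z rule: generate_topology_on.induct)
  case (Int U V)
  from Int.prems have "z \<in> U" "z \<in> V" by auto
  then obtain P N P' N' where "finite P" "finite N" "P \<subseteq> z" "N \<subseteq> B - z" "cylinder B P N \<subseteq> U"
    and "finite P'" "finite N'" "P' \<subseteq> z" "N' \<subseteq> B - z" "cylinder B P' N' \<subseteq> V"
    using Int.IH by meson
  moreover have "cylinder B (P \<union> P') (N \<union> N') \<subseteq> cylinder B P N \<inter> cylinder B P' N'"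
    unfolding cylinder_def by blast
  ultimately show ?case
    by (intro exI[of _ "P \<union> P'"] exI[of _ "N \<union> N'"]) blast
next
  case (UN K)
  then obtain U where "U \<in> K" "z \<in> U" by blast
  from UN.IH[OF this] obtain P N
    where "finite P" "finite N" "P \<subseteq> z" "N \<subseteq> B - z" "cylinder B P N \<subseteq> U"
    by blast
  moreover from this have "cylinder B P N \<subseteq> \<Union>K" using \<open>U \<in> K\<close> by blast
  ultimately show ?case by (intro exI[of _ P] exI[of _ N]) simp
next
  case (Basis U)
  then obtain a where a: "a \<in> B" and U: "U = {w. w \<subseteq> B \<and> a \<in> w} \<or> U = {w. w \<subseteq> B \<and> a \<notin> w}"
    by blast
  show ?case
  proof (cases "a \<in> z")
    case True
    then have "cylinder B {a} {} \<subseteq> U" using U Basis.prems unfolding cylinder_def by blast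
    with True show ?thesis by (intro exI[of _ "{a}"] exI[of _ "{}"]) simp
  next
    case False
    then have "cylinder B {} {a} \<subseteq> U" using U Basis.prems unfolding cylinder_def by blast
    with False a show ?thesis by (intro exI[of _ "{}"] exI[of _ "{a}"]) simp
  qed
qed simp

lemma isolated_in_natural_top_iff:
  assumes "B \<noteq> {}" "Y \<subseteq> Pow B" "x \<in> Y"
  shows "openin (subtopology (natural_top B) Y) {x} \<longleftrightarrow>
    (\<exists>P N. finite P \<and> finite N \<and> P \<subseteq> x \<and> N \<subseteq> B - x \<and> cylinder B P N \<inter> Y = {x})"
proof
  assume "openin (subtopology (natural_top B) Y) {x}"
  then obtain U where U: "openin (natural_top B) U" "{x} = U \<inter> Y"
    unfolding openin_subtopology by blast
  have "x \<in> U" "x \<subseteq> B" using U(2) assms(2,3) by auto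
  then obtain P N where PN: "finite P" "finite N" "P \<subseteq> x" "N \<subseteq> B - x" "cylinder B P N \<subseteq> U"
    using natural_top_open_contains_cylinder[OF U(1) \<open>x \<in> U\<close>] by blast
  have "x \<in> cylinder B P N" using PN(3,4) \<open>x \<subseteq> B\<close> unfolding cylinder_def by blast
  moreover have "cylinder B P N \<inter> Y \<subseteq> {x}" using PN(5) U(2) by blast
  ultimately have "cylinder B P N \<inter> Y = {x}" using assms(3) by blast
  with PN(1-4) show "\<exists>P N. finite P \<and> finite N \<and> P \<subseteq> x \<and> N \<subseteq> B - x \<and> cylinder B P N \<inter> Y = {x}"
    by blast
next
  assume "\<exists>P N. finite P \<and> finite N \<and> P \<subseteq> x \<and> N \<subseteq> B - x \<and> cylinder B P N \<inter> Y = {x}"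
  then obtain P N where PN: "finite P" "finite N" "P \<subseteq> x" "N \<subseteq> B - x" "cylinder B P N \<inter> Y = {x}"
    by blast
  have "P \<subseteq> B" "N \<subseteq> B" using PN(3,4) assms(2,3) by auto
  then have "openin (natural_top B) (cylinder B P N)"
    using openin_natural_top_cylinder[OF assms(1) PN(1,2)] by blast
  then show "openin (subtopology (natural_top B) Y) {x}"
    unfolding openin_subtopology using PN(5) by blast
qed


locale product_order_bot =
  fixes I :: "'i set" and A :: "'i \<Rightarrow> 'a set" and R :: "'i \<Rightarrow> ('a \<times> 'a) set"
    and bot :: "'i \<Rightarrow> 'a"
  assumes finite_components: "i \<in> I \<Longrightarrow> finite (A i)"
    and partial_order_components: "i \<in> I \<Longrightarrow> partial_order_on (A i) (R i)"
    and bot_in: "i \<in> I \<Longrightarrow> bot i \<in> A i"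
    and bot_least: "i \<in> I \<Longrightarrow> a \<in> A i \<Longrightarrow> (bot i, a) \<in> R i"
begin

lemma trans_component: "i \<in> I \<Longrightarrow> (a, b) \<in> R i \<Longrightarrow> (b, c) \<in> R i \<Longrightarrow> (a, c) \<in> R i"
  using partial_order_components
  unfolding partial_order_on_def preorder_on_def trans_def by blast

lemma prod_le_refl: "a \<in> PiE I A \<Longrightarrow> prod_le I R a a"
  using partial_order_components
  unfolding prod_le_def partial_order_on_def preorder_on_def refl_on_def by (auto simp: PiE_iff)

lemma transp_prod_le: "transp (prod_le I R)"
  using trans_component unfolding transp_def prod_le_def by blast

definition trunc :: "'i set \<Rightarrow> ('i \<Rightarrow> 'a) \<Rightarrow> 'i \<Rightarrow> 'a" where
  "trunc J a = restrict (\<lambda>i. if i \<in> J then a i else bot i) I"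

lemma trunc_in_PiE: "a \<in> PiE I A \<Longrightarrow> trunc J a \<in> PiE I A"
  using bot_in by (auto simp: trunc_def PiE_iff)

lemma trunc_eq: "a \<in> PiE I A \<Longrightarrow> i \<in> J \<Longrightarrow> trunc J a i = a i"
  by (cases "i \<in> I") (auto simp: trunc_def PiE_iff extensional_def)

lemma trunc_le: "a \<in> PiE I A \<Longrightarrow> prod_le I R (trunc J a) a"
  using prod_le_refl[of a] bot_least by (auto simp: trunc_def prod_le_def PiE_iff)

lemma trunc_mem_iff: "determined_by (PiE I A) J x \<Longrightarrow> a \<in> PiE I A \<Longrightarrow> trunc J a \<in> x \<longleftrightarrow> a \<in> x"
  unfolding determined_by_def using trunc_in_PiE trunc_eq by metis

lemma finite_trunc_image: "finite J \<Longrightarrow> finite (trunc J ` PiE I A)"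
proof -
  assume "finite J"
  have "trunc J a = trunc J (restrict a (J \<inter> I))" for a
    by (auto simp: trunc_def)
  moreover have "restrict a (J \<inter> I) \<in> PiE (J \<inter> I) A" if "a \<in> PiE I A" for a
    using that by auto
  ultimately have "trunc J ` PiE I A \<subseteq> trunc J ` PiE (J \<inter> I) A"
    by (metis image_eqI image_subsetI)
  moreover have "finite (PiE (J \<inter> I) A)"
    using \<open>finite J\<close> finite_components by (intro finite_PiE) auto
  ultimately show ?thesis by (meson finite_imageI finite_subset)
qed

lemma up_of_trunc:
  "up_of (PiE I A) (prod_le I R) (trunc J a) = {c \<in> PiE I A. \<forall>i\<in>I \<inter> J. (a i, c i) \<in> R i}"
  using bot_least by (auto simp: up_of_def trunc_def prod_le_def PiE_iff)

lemma determined_by_up_of_trunc: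
  "determined_by (PiE I A) (I \<inter> J) (up_of (PiE I A) (prod_le I R) (trunc J a))"
  unfolding up_of_trunc determined_by_def by auto

abbreviation axis_points :: "('i \<Rightarrow> 'a) set" where
  "axis_points \<equiv> {a \<in> PiE I A. \<exists>j. \<forall>i\<in>I. i \<noteq> j \<longrightarrow> a i = bot i}"

abbreviation axis_generators :: "('i \<Rightarrow> 'a) set set" where
  "axis_generators \<equiv> {{}} \<union> {up_of (PiE I A) (prod_le I R) s | s. s \<in> axis_points}"

lemma trunc_in_axis_points: "a \<in> PiE I A \<Longrightarrow> J \<subseteq> {j} \<Longrightarrow> trunc J a \<in> axis_points"
  using trunc_in_PiE by (auto simp: trunc_def intro!: exI[of _ j])

lemma axis_point_eq_trunc:
  assumes "s \<in> axis_points"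
  shows "\<exists>j. s = trunc {j} s"
proof -
  from assms obtain j where "s \<in> PiE I A" "\<forall>i\<in>I. i \<noteq> j \<longrightarrow> s i = bot i" by blast
  then have "s = trunc {j} s" unfolding trunc_def by (intro ext) (auto simp: PiE_iff extensional_def)
  then show ?thesis ..
qed

lemma up_of_axis_point_in_gen_lattice:
  "s \<in> axis_points \<Longrightarrow> up_of (PiE I A) (prod_le I R) s \<in> gen_lattice axis_generators"
  by (intro gen_lattice.base) blast

lemma up_of_trunc_in_gen_lattice:
  assumes "finite J" "a \<in> PiE I A"
  shows "up_of (PiE I A) (prod_le I R) (trunc J a) \<in> gen_lattice axis_generators"
  using assms(1)
proof (induction J rule: finite_induct)
  case empty
  have "trunc {} a \<in> axis_points" by (rule trunc_in_axis_points[OF assms(2)]) simp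
  then show ?case by (rule up_of_axis_point_in_gen_lattice)
next
  case (insert j J)
  have "up_of (PiE I A) (prod_le I R) (trunc (insert j J) a) =
      up_of (PiE I A) (prod_le I R) (trunc J a) \<inter> up_of (PiE I A) (prod_le I R) (trunc {j} a)"
    unfolding up_of_trunc by blast
  moreover have "trunc {j} a \<in> axis_points" by (rule trunc_in_axis_points[OF assms(2)]) simp
  ultimately show ?case
    using insert.IH up_of_axis_point_in_gen_lattice by (simp add: gen_lattice.int)
qed

lemma up_set_eq_UN_up_of_trunc:
  assumes "up_set (PiE I A) (prod_le I R) x" "determined_by (PiE I A) J x"
  shows "x = (\<Union>m\<in>trunc J ` x. up_of (PiE I A) (prod_le I R) m)"
proof
  show "x \<subseteq> (\<Union>m\<in>trunc J ` x. up_of (PiE I A) (prod_le I R) m)"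
    using assms(1) trunc_le unfolding up_set_def up_of_def by blast
  show "(\<Union>m\<in>trunc J ` x. up_of (PiE I A) (prod_le I R) m) \<subseteq> x"
    using assms trunc_mem_iff unfolding up_set_def up_of_def by blast
qed

lemma finitely_determined_axis_generator:
  assumes "g \<in> axis_generators"
  shows "finitely_determined I (PiE I A) g"
proof -
  consider "g = {}" | s where "s \<in> axis_points" "g = up_of (PiE I A) (prod_le I R) s"
    using assms by blast
  then show ?thesis
  proof cases
    case 1
    then show ?thesis
      unfolding finitely_determined_def by (intro exI[of _ "{}"]) (simp add: determined_by_def)
  next
    case 2
    obtain j where "s = trunc {j} s" using axis_point_eq_trunc[OF 2(1)] by blast
    then have "g = up_of (PiE I A) (prod_le I R) (trunc {j} s)"
      using 2(2) by (metis (no_types))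
    then have "determined_by (PiE I A) (I \<inter> {j}) g"
      using determined_by_up_of_trunc by blast
    then show ?thesis
      unfolding finitely_determined_def by (intro exI[of _ "I \<inter> {j}"]) auto
  qed
qed

lemma gen_lattice_iff_finitely_determined:
  assumes "up_set (PiE I A) (prod_le I R) x"
  shows "x \<in> gen_lattice axis_generators \<longleftrightarrow> finitely_determined I (PiE I A) x"
proof
  assume "x \<in> gen_lattice axis_generators"
  then show "finitely_determined I (PiE I A) x"
    using gen_lattice_finitely_determined finitely_determined_axis_generator by blast
next
  assume "finitely_determined I (PiE I A) x"
  then obtain J where J: "finite J" "determined_by (PiE I A) J x"
    unfolding finitely_determined_def by blast
  have "trunc J ` x \<subseteq> trunc J ` PiE I A"
    using assms unfolding up_set_def by blast
  then have "finite (trunc J ` x)"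
    using finite_trunc_image[OF J(1)] by (rule finite_subset)
  moreover have "up_of (PiE I A) (prod_le I R) m \<in> gen_lattice axis_generators"
    if "m \<in> trunc J ` x" for m
    using that assms up_of_trunc_in_gen_lattice[OF J(1)] unfolding up_set_def by blast
  ultimately have "(\<Union>m\<in>trunc J ` x. up_of (PiE I A) (prod_le I R) m) \<in> gen_lattice axis_generators"
    by (intro gen_lattice_UN) auto
  then show "x \<in> gen_lattice axis_generators"
    using up_set_eq_UN_up_of_trunc[OF assms J(2)] by simp
qed

lemma determined_by_if_separated:
  assumes up: "(\<Union>p\<in>P. up_of (PiE I A) (prod_le I R) p) = x"
    and down: "PiE I A - (\<Union>n\<in>N. down_of (PiE I A) (prod_le I R) n) = x"
    and "J \<subseteq> I" and sep: "\<And>p n. p \<in> P \<Longrightarrow> n \<in> N \<Longrightarrow> \<exists>i\<in>J. (p i, n i) \<notin> R i"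
  shows "determined_by (PiE I A) J x"
proof (rule determined_byI)
  fix a b assume ab: "a \<in> PiE I A" "b \<in> PiE I A" "\<forall>i\<in>J. a i = b i" "a \<in> x"
  show "b \<in> x"
  proof (rule ccontr)
    assume "b \<notin> x"
    obtain p where p: "p \<in> P" "prod_le I R p a" using ab(4) up unfolding up_of_def by blast
    obtain n where n: "n \<in> N" "prod_le I R b n"
      using ab(2) \<open>b \<notin> x\<close> down unfolding down_of_def by blast
    obtain i where "i \<in> J" "(p i, n i) \<notin> R i" using sep[OF p(1) n(1)] by blast
    moreover have "(p i, a i) \<in> R i" "(b i, n i) \<in> R i" "i \<in> I"
      using p(2) n(2) \<open>i \<in> J\<close> \<open>J \<subseteq> I\<close> unfolding prod_le_def by auto
    ultimately show False using ab(3) trans_component by metis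
  qed
qed

lemma finitely_determined_if_isolated:
  assumes x: "up_set (PiE I A) (prod_le I R) x"
    and PN: "finite P" "finite N" "P \<subseteq> x" "N \<subseteq> PiE I A - x"
    and isolated: "cylinder (PiE I A) P N \<inter> {w. up_set (PiE I A) (prod_le I R) w} = {x}"
  shows "finitely_determined I (PiE I A) x"
proof -
  let ?B = "PiE I A" and ?le = "prod_le I R"
  have eq_x: "w = x" if "up_set ?B ?le w" "P \<subseteq> w" "N \<inter> w = {}" for w
    using isolated that unfolding cylinder_def up_set_def by blast
  have up_closure: "(\<Union>p\<in>P. up_of ?B ?le p) = x"
  proof (rule eq_x)
    show "up_set ?B ?le (\<Union>p\<in>P. up_of ?B ?le p)"
      using transp_prod_le by (rule up_set_UN_up_of)
    show "P \<subseteq> (\<Union>p\<in>P. up_of ?B ?le p)"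
      using PN(3) x prod_le_refl unfolding up_set_def up_of_def by blast
    show "N \<inter> (\<Union>p\<in>P. up_of ?B ?le p) = {}"
      using PN(3,4) x unfolding up_set_def up_of_def by blast
  qed
  have down_closure_complement: "?B - (\<Union>n\<in>N. down_of ?B ?le n) = x"
  proof (rule eq_x)
    have "up_set ?B ?le\<inverse>\<inverse> (\<Union>n\<in>N. down_of ?B ?le n)"
      unfolding down_of_eq_up_of_conversep using transp_prod_le by (simp add: up_set_UN_up_of)
    then show "up_set ?B ?le (?B - (\<Union>n\<in>N. down_of ?B ?le n))"
      using up_set_Diff_conversep by fastforce
    show "P \<subseteq> ?B - (\<Union>n\<in>N. down_of ?B ?le n)"
      using PN(3,4) x unfolding up_set_def down_of_def by blast
    show "N \<inter> (?B - (\<Union>n\<in>N. down_of ?B ?le n)) = {}"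
      using PN(4) prod_le_refl unfolding down_of_def by blast
  qed
  have "\<exists>i\<in>I. (p i, n i) \<notin> R i" if "p \<in> P" "n \<in> N" for p n
    using that PN(3,4) x unfolding up_set_def prod_le_def by blast
  then obtain sep where sep: "\<And>p n. p \<in> P \<Longrightarrow> n \<in> N \<Longrightarrow>
      sep p n \<in> I \<and> (p (sep p n), n (sep p n)) \<notin> R (sep p n)"
    by metis
  define J where "J = (\<lambda>(p, n). sep p n) ` (P \<times> N)"
  have "finite J" "J \<subseteq> I" unfolding J_def using PN(1,2) sep by auto
  moreover have "determined_by ?B J x"
    using up_closure down_closure_complement \<open>J \<subseteq> I\<close>
  proof (rule determined_by_if_separated)
    fix p n assume "p \<in> P" "n \<in> N"
    then show "\<exists>i\<in>J. (p i, n i) \<notin> R i" unfolding J_def using sep by force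
  qed
  ultimately show ?thesis unfolding finitely_determined_def by blast
qed

lemma reindex_lift:
  fixes n :: nat
  assumes h: "bij_betw h {..<n} J" "J \<subseteq> I"
    and a: "a \<in> PiE I A" and u: "u \<in> PiE {..<n} (\<lambda>k. A (h k))"
    and le: "prod_le {..<n} (\<lambda>k. R (h k)) (restrict (\<lambda>k. a (h k)) {..<n}) u"
  shows "\<exists>a'\<in>PiE I A. prod_le I R a a' \<and> restrict (\<lambda>k. a' (h k)) {..<n} = u"
proof -
  define g where "g = inv_into {..<n} h"
  have hg: "g i < n" "h (g i) = i" if "i \<in> J" for i
    using that h(1) unfolding g_def bij_betw_def by (auto intro: inv_into_into f_inv_into_f)
  have gh: "g (h k) = k" if "k < n" for k
    using that h(1) unfolding g_def bij_betw_def by (simp add: inv_into_f_f)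
  define a' where "a' = restrict (\<lambda>i. if i \<in> J then u (g i) else a i) I"
  have "a' \<in> PiE I A"
    unfolding a'_def restrict_PiE_iff
  proof
    fix i assume "i \<in> I"
    show "(if i \<in> J then u (g i) else a i) \<in> A i"
    proof (cases "i \<in> J")
      case True
      have "u (g i) \<in> A (h (g i))" using PiE_mem[OF u] hg(1)[OF True] by simp
      with True show ?thesis by (simp add: hg(2))
    next
      case False
      with PiE_mem[OF a \<open>i \<in> I\<close>] show ?thesis by simp
    qed
  qed
  moreover have "prod_le I R a a'"
    unfolding prod_le_def
  proof
    fix i assume "i \<in> I"
    show "(a i, a' i) \<in> R i"
    proof (cases "i \<in> J")
      case True
      have "(a (h (g i)), u (g i)) \<in> R (h (g i))"
        using le hg(1)[OF True] unfolding prod_le_def by auto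
      with True \<open>i \<in> I\<close> show ?thesis unfolding a'_def by (simp add: hg(2))
    next
      case False
      with prod_le_refl[OF a] \<open>i \<in> I\<close> show ?thesis unfolding a'_def prod_le_def by simp
    qed
  qed
  moreover have "restrict (\<lambda>k. a' (h k)) {..<n} = u"
    using u h gh unfolding a'_def bij_betw_def
    by (intro ext) (auto simp: PiE_iff extensional_def)
  ultimately show ?thesis by blast
qed

lemma pullback_iff_finitely_determined:
  assumes x: "up_set (PiE I A) (prod_le I R) x"
  shows "(\<exists>n::nat. \<exists>f::nat \<Rightarrow> 'i. inj_on f {..<n} \<and> f ` {..<n} \<subseteq> I \<and>
            (\<exists>y. up_set (PiE {..<n} (\<lambda>k. A (f k))) (prod_le {..<n} (\<lambda>k. R (f k))) y \<and>
                 x = {a \<in> PiE I A. restrict (\<lambda>k. a (f k)) {..<n} \<in> y}))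
    \<longleftrightarrow> finitely_determined I (PiE I A) x"
proof
  assume "\<exists>n::nat. \<exists>f::nat \<Rightarrow> 'i. inj_on f {..<n} \<and> f ` {..<n} \<subseteq> I \<and>
            (\<exists>y. up_set (PiE {..<n} (\<lambda>k. A (f k))) (prod_le {..<n} (\<lambda>k. R (f k))) y \<and>
                 x = {a \<in> PiE I A. restrict (\<lambda>k. a (f k)) {..<n} \<in> y})"
  then obtain n :: nat and f y where "f ` {..<n} \<subseteq> I" "x = {a \<in> PiE I A. restrict (\<lambda>k. a (f k)) {..<n} \<in> y}"
    by blast
  then show "finitely_determined I (PiE I A) x"
    by (rule finitely_determined_pullback)
next
  assume "finitely_determined I (PiE I A) x"
  then obtain J where J: "finite J" "J \<subseteq> I" "determined_by (PiE I A) J x"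
    unfolding finitely_determined_def by blast
  define n where "n = card J"
  obtain h where h: "bij_betw h {..<n} J"
    using ex_bij_betw_nat_finite[OF J(1)] unfolding n_def atLeast0LessThan by blast
  define proj where "proj a = restrict (\<lambda>k. a (h k)) {..<n}" for a :: "'i \<Rightarrow> 'a"
  have "up_set (PiE {..<n} (\<lambda>k. A (h k))) (prod_le {..<n} (\<lambda>k. R (h k))) (proj ` x)"
  proof (rule up_set_image[OF x])
    have "h k \<in> I" if "k < n" for k using h J(2) that unfolding bij_betw_def by auto
    then show "proj ` PiE I A \<subseteq> PiE {..<n} (\<lambda>k. A (h k))"
      unfolding proj_def restrict_PiE_iff image_subset_iff by (simp add: PiE_iff)
  next
    fix a u
    assume "a \<in> PiE I A" "u \<in> PiE {..<n} (\<lambda>k. A (h k))" "prod_le {..<n} (\<lambda>k. R (h k)) (proj a) u"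
    then show "\<exists>a'\<in>PiE I A. prod_le I R a a' \<and> proj a' = u"
      unfolding proj_def by (rule reindex_lift[OF h J(2)])
  qed
  moreover have "x = {a \<in> PiE I A. proj a \<in> proj ` x}"
  proof (rule determined_by_eq_preimage_image[OF _ J(3)])
    show "x \<subseteq> PiE I A" using x unfolding up_set_def by blast
    fix a b assume "proj a = proj b"
    show "\<forall>i\<in>J. a i = b i"
    proof
      fix i assume "i \<in> J"
      then obtain k where "k < n" "i = h k" using h unfolding bij_betw_def by auto
      then show "a i = b i" using fun_cong[OF \<open>proj a = proj b\<close>, of k] by (simp add: proj_def)
    qed
  qed
  moreover have "inj_on h {..<n}" "h ` {..<n} \<subseteq> I" using h J(2) by (auto simp: bij_betw_def)
  ultimately show "\<exists>n::nat. \<exists>f::nat \<Rightarrow> 'i. inj_on f {..<n} \<and> f ` {..<n} \<subseteq> I \<and>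
            (\<exists>y. up_set (PiE {..<n} (\<lambda>k. A (f k))) (prod_le {..<n} (\<lambda>k. R (f k))) y \<and>
                 x = {a \<in> PiE I A. restrict (\<lambda>k. a (f k)) {..<n} \<in> y})"
    unfolding proj_def by blast
qed

end

locale product_order_bounded =
  lower: product_order_bot I A R bot + upper: product_order_bot I A "\<lambda>i. (R i)\<inverse>" top
  for I :: "'i set" and A :: "'i \<Rightarrow> 'a set" and R :: "'i \<Rightarrow> ('a \<times> 'a) set"
    and bot top :: "'i \<Rightarrow> 'a"
begin

lemma determined_up_set_eqI:
  assumes x: "up_set (PiE I A) (prod_le I R) x" "determined_by (PiE I A) J x"
    and w: "up_set (PiE I A) (prod_le I R) w" "lower.trunc J ` x \<subseteq> w"
      "upper.trunc J ` (PiE I A - x) \<inter> w = {}"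
  shows "w = x"
proof
  show "x \<subseteq> w"
  proof
    fix c assume "c \<in> x"
    then have "c \<in> PiE I A" using x(1) unfolding up_set_def by blast
    moreover have "lower.trunc J c \<in> w" using \<open>c \<in> x\<close> w(2) by blast
    ultimately show "c \<in> w" using w(1) lower.trunc_le unfolding up_set_def by blast
  qed
  show "w \<subseteq> x"
  proof
    fix c assume "c \<in> w"
    then have "c \<in> PiE I A" using w(1) unfolding up_set_def by blast
    then have "prod_le I R c (upper.trunc J c)" "upper.trunc J c \<in> PiE I A"
      using upper.trunc_le upper.trunc_in_PiE by (auto simp: prod_le_converse)
    then have "upper.trunc J c \<in> w" using \<open>c \<in> w\<close> w(1) unfolding up_set_def by blast
    then show "c \<in> x" using w(3) \<open>c \<in> PiE I A\<close> by blast
  qed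
qed

lemma isolated_if_finitely_determined:
  assumes x: "up_set (PiE I A) (prod_le I R) x" and "finitely_determined I (PiE I A) x"
  shows "\<exists>P N. finite P \<and> finite N \<and> P \<subseteq> x \<and> N \<subseteq> PiE I A - x \<and>
    cylinder (PiE I A) P N \<inter> {w. up_set (PiE I A) (prod_le I R) w} = {x}"
proof -
  let ?B = "PiE I A"
  obtain J where J: "finite J" "determined_by ?B J x"
    using assms(2) unfolding finitely_determined_def by blast
  have xB: "x \<subseteq> ?B" using x unfolding up_set_def by blast
  define P where "P = lower.trunc J ` x"
  define N where "N = upper.trunc J ` (?B - x)"
  have finP: "finite P"
    unfolding P_def using finite_subset[OF image_mono[OF xB] lower.finite_trunc_image[OF J(1)]] .
  have finN: "finite N"
    unfolding N_def using finite_subset[OF image_mono[OF Diff_subset] upper.finite_trunc_image[OF J(1)]] .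
  have Px: "P \<subseteq> x" unfolding P_def using xB lower.trunc_mem_iff[OF J(2)] by blast
  have "determined_by ?B J (?B - x)" using J(2) by (simp add: determined_by_Diff)
  from upper.trunc_mem_iff[OF this] have Nx: "N \<subseteq> ?B - x" unfolding N_def by blast
  have "w = x" if "w \<in> cylinder ?B P N" "up_set ?B (prod_le I R) w" for w
    using that(1) unfolding cylinder_def P_def N_def
    by (intro determined_up_set_eqI[OF x J(2) that(2)]) auto
  then have "cylinder ?B P N \<inter> {w. up_set ?B (prod_le I R) w} \<subseteq> {x}" by blast
  moreover have "x \<in> cylinder ?B P N" using xB Px Nx unfolding cylinder_def by blast
  ultimately have "cylinder ?B P N \<inter> {w. up_set ?B (prod_le I R) w} = {x}" using x by blast
  with finP finN Px Nx show ?thesis by (intro exI[of _ P] exI[of _ N]) simp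
qed

lemma isolated_iff_finitely_determined:
  assumes x: "up_set (PiE I A) (prod_le I R) x"
  shows "openin (subtopology (natural_top (PiE I A)) {w. up_set (PiE I A) (prod_le I R) w}) {x}
    \<longleftrightarrow> finitely_determined I (PiE I A) x"
proof -
  have "restrict bot I \<in> PiE I A" using lower.bot_in by simp
  then have "PiE I A \<noteq> {}" by blast
  moreover have "{w. up_set (PiE I A) (prod_le I R) w} \<subseteq> Pow (PiE I A)"
    unfolding up_set_def by blast
  moreover have "x \<in> {w. up_set (PiE I A) (prod_le I R) w}" using x by simp
  ultimately have iso: "openin (subtopology (natural_top (PiE I A)) {w. up_set (PiE I A) (prod_le I R) w}) {x}
    \<longleftrightarrow> (\<exists>P N. finite P \<and> finite N \<and> P \<subseteq> x \<and> N \<subseteq> PiE I A - x \<and>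
          cylinder (PiE I A) P N \<inter> {w. up_set (PiE I A) (prod_le I R) w} = {x})"
    by (rule isolated_in_natural_top_iff)
  show ?thesis
    unfolding iso
  proof
    assume "\<exists>P N. finite P \<and> finite N \<and> P \<subseteq> x \<and> N \<subseteq> PiE I A - x \<and>
      cylinder (PiE I A) P N \<inter> {w. up_set (PiE I A) (prod_le I R) w} = {x}"
    then show "finitely_determined I (PiE I A) x"
      by (elim exE conjE) (rule lower.finitely_determined_if_isolated[OF x])
  qed (rule isolated_if_finitely_determined[OF x])
qed

end

theorem lemma9p1:
  fixes I :: "'i set"
    and A :: "'i \<Rightarrow> 'a set"
    and R :: "'i \<Rightarrow> ('a \<times> 'a) set"
    and zero one :: "'i \<Rightarrow> 'a"
    and x :: "('i \<Rightarrow> 'a) set"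
  assumes fin: "\<forall>i\<in>I. finite (A i)"
    and po: "\<forall>i\<in>I. partial_order_on (A i) (R i)"
    and zero: "\<forall>i\<in>I. zero i \<in> A i \<and> (\<forall>a\<in>A i. (zero i, a) \<in> R i)"
    and one: "\<forall>i\<in>I. one i \<in> A i \<and> (\<forall>a\<in>A i. (a, one i) \<in> R i)"
    and xU: "up_set (PiE I A) (prod_le I R) x"
  defines "S \<equiv> {a \<in> PiE I A. \<exists>j. \<forall>i\<in>I. i \<noteq> j \<longrightarrow> a i = zero i}"
    and "S' \<equiv> {a \<in> PiE I A. \<exists>j. \<forall>i\<in>I. i \<noteq> j \<longrightarrow> a i = one i}"
    and "UA \<equiv> {y. up_set (PiE I A) (prod_le I R) y}"
  shows "(openin (subtopology (natural_top (PiE I A)) UA) {x}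
          \<longleftrightarrow> (\<exists>n::nat. \<exists>f::nat \<Rightarrow> 'i. inj_on f {..<n} \<and> f ` {..<n} \<subseteq> I \<and>
                 (\<exists>y. up_set (PiE {..<n} (\<lambda>k. A (f k))) (prod_le {..<n} (\<lambda>k. R (f k))) y \<and>
                      x = {a \<in> PiE I A. restrict (\<lambda>k. a (f k)) {..<n} \<in> y})))
       \<and> ((\<exists>n::nat. \<exists>f::nat \<Rightarrow> 'i. inj_on f {..<n} \<and> f ` {..<n} \<subseteq> I \<and>
                 (\<exists>y. up_set (PiE {..<n} (\<lambda>k. A (f k))) (prod_le {..<n} (\<lambda>k. R (f k))) y \<and>
                      x = {a \<in> PiE I A. restrict (\<lambda>k. a (f k)) {..<n} \<in> y}))
          \<longleftrightarrow> x \<in> gen_lattice ({{}} \<union> {up_of (PiE I A) (prod_le I R) s | s. s \<in> S}))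
       \<and> (x \<in> gen_lattice ({{}} \<union> {up_of (PiE I A) (prod_le I R) s | s. s \<in> S})
          \<longleftrightarrow> PiE I A - x \<in> gen_lattice ({{}} \<union> {down_of (PiE I A) (prod_le I R) s | s. s \<in> S'}))"
proof -
  interpret product_order_bounded I A R zero one
    using fin po zero one by unfold_locales auto
  have i: "openin (subtopology (natural_top (PiE I A)) UA) {x} \<longleftrightarrow> finitely_determined I (PiE I A) x"
    unfolding UA_def by (rule isolated_iff_finitely_determined[OF xU])
  note ii = lower.pullback_iff_finitely_determined[OF xU]
  have iii: "x \<in> gen_lattice ({{}} \<union> {up_of (PiE I A) (prod_le I R) s | s. s \<in> S})
      \<longleftrightarrow> finitely_determined I (PiE I A) x"
    unfolding S_def by (rule lower.gen_lattice_iff_finitely_determined[OF xU])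
  have "up_set (PiE I A) (prod_le I (\<lambda>i. (R i)\<inverse>)) (PiE I A - x)"
    using up_set_Diff_conversep[OF xU] by (simp add: prod_le_converse)
  then have "PiE I A - x \<in> gen_lattice ({{}} \<union> {up_of (PiE I A) (prod_le I (\<lambda>i. (R i)\<inverse>)) s | s. s \<in> S'})
      \<longleftrightarrow> finitely_determined I (PiE I A) (PiE I A - x)"
    unfolding S'_def by (rule upper.gen_lattice_iff_finitely_determined)
  then have iv: "PiE I A - x \<in> gen_lattice ({{}} \<union> {down_of (PiE I A) (prod_le I R) s | s. s \<in> S'})
      \<longleftrightarrow> finitely_determined I (PiE I A) x"
    by (simp add: down_of_eq_up_of_conversep prod_le_converse finitely_determined_Diff)
  show ?thesis by (simp only: i ii iii iv)
qed

end
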